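(* In the Krylov setting described in the context, assume in addition that $SU_{d+1}$ has full column rank and that its thin QR factor $T_{d+1}$ has positive diagonal. Then $$(SU_d)^\dagger SAU_d = H_d+re_d^T,\qquad (SU_d)^\dagger Sb=\|b\|e_1,$$ so that $f_d^{\mathrm{sk}}=U_d f(H_d+re_d^T)e_1\|b\|$. Moreover, with $\widehat H_d=T_dH_dT_d^{-1}$ and $\widehat t=(h_{d+1,d}/\tau_d)t$, where $\tau_d$ is the $(d,d)$ entry of $T_d$, $$f_d^{\mathrm{sk}}=U_dT_d^{-1} f\big(\widehat H_d+\widehat t e_d^T\big)e_1\|Sb\|.$$ Here $f$ is any function analytic on an open set containing the spectrum of $H_d+re_d^T$.
   Context: Krylov setting: $A\in\mathbb{R}^{n\times n}$, $b\in\mathbb{R}^n\setminus\{0\}$, $\mathcal{K}_j(A,b)=\mathrm{span}\{b,Ab,\dots,A^{j-1}b\}$, and $d\ge 1$ with $\dim\mathcal{K}_{d+1}(A,b)=d+1$. A (truncated, non-orthogonal) Krylov basis $U_{d+1}=[U_d,u_{d+1}]\in\mathbb{R}^{n\times(d+1)}$ has first column $b/\|b\|$, its first $j$ columns span $\mathcal{K}_j(A,b)$ for $j=1,\dots,d+1$, and it satisfies $AU_d=U_dH_d+h_{d+1,d}u_{d+1}e_d^T$ with $H_d\in\mathbb{R}^{d\times d}$ upper Hessenberg and $h_{d+1,d}\neq 0$. $S\in\mathbb{R}^{s\times n}$ is a sketching matrix; $SU_{d+1}=Q_{d+1}T_{d+1}$ is a thin QR decomposition with $Q_{d+1}=[Q_d,q]$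 and $T_{d+1}=\begin{bmatrix}T_d&t\\0^T&\tau_{d+1}\end{bmatrix}$, and $r=h_{d+1,d}T_d^{-1}t$. The sketched FOM approximation is $f_d^{\mathrm{sk}}=U_d f\big((SU_d)^\dagger SAU_d\big)(SU_d)^\dagger Sb$, where $\dagger$ denotes the Moore–Penrose pseudoinverse. $e_j$ is the $j$th identity column; $f(\cdot)$ of a matrix is the standard (Cauchy-integral) matrix function. *)

theory Defs
  imports "HOL-Complex_Analysis.Complex_Analysis" "Jordan_Normal_Form.Jordan_Normal_Form"
begin

unbundle no vec_syntax
unbundle no inner_syntax
no_notation Finite_Cartesian_Product.matrix_vector_mult (infixl \<open>*v\<close> 70)
no_notation Finite_Cartesian_Product.vector_matrix_mult (infixl \<open>v*\<close> 70)
no_notation Finite_Cartesian_Product.matrix_matrix_mult (infixl \<open>**\<close> 70)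

definition vnorm :: "real vec \<Rightarrow> real" where
  "vnorm v = sqrt (v \<bullet> v)"

definition outer :: "'a::times vec \<Rightarrow> 'a vec \<Rightarrow> 'a mat" where
  "outer u v = mat (dim_vec u) (dim_vec v) (\<lambda>(i,j). u $ i * v $ j)"

definition mat_inv :: "'a::field mat \<Rightarrow> 'a mat" where
  "mat_inv M = (THE X. X \<in> carrier_mat (dim_row M) (dim_row M) \<and>
                       M * X = 1\<^sub>m (dim_row M) \<and> X * M = 1\<^sub>m (dim_row M))"

definition pinv :: "real mat \<Rightarrow> real mat" where
  "pinv M = (THE X. X \<in> carrier_mat (dim_col M) (dim_row M) \<and>
                    M * X * M = M \<and> X * M * X = X \<and>
                    transpose_mat (M * X) = M * X \<and> transpose_mat (X * M) = X * M)"

definition take_cols :: "'a mat \<Rightarrow> nat \<Rightarrow> 'a mat" where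
  "take_cols M k = mat (dim_row M) k (\<lambda>(i,j). M $$ (i,j))"

definition col_span :: "real mat \<Rightarrow> real vec set" where
  "col_span M = {M *\<^sub>v c | c. c \<in> carrier_vec (dim_col M)}"

definition krylov_mat :: "real mat \<Rightarrow> real vec \<Rightarrow> nat \<Rightarrow> real mat" where
  "krylov_mat A b j = mat (dim_vec b) j (\<lambda>(i,k). ((A ^\<^sub>m k) *\<^sub>v b) $ i)"

definition krylov :: "real mat \<Rightarrow> real vec \<Rightarrow> nat \<Rightarrow> real vec set" where
  "krylov A b j = col_span (krylov_mat A b j)"

definition cmat :: "real mat \<Rightarrow> complex mat" where
  "cmat M = map_mat complex_of_real M"

definition cvec :: "real vec \<Rightarrow> complex vec" where
  "cvec v = map_vec complex_of_real v"

definition spec :: "complex mat \<Rightarrow> complex set" where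
  "spec M = {z. eigenvalue M z}"

definition resolvent :: "complex \<Rightarrow> complex mat \<Rightarrow> complex mat" where
  "resolvent z M = mat_inv (z \<cdot>\<^sub>m 1\<^sub>m (dim_row M) - M)"

definition admissible_cycle :: "complex set \<Rightarrow> complex mat \<Rightarrow> (real \<Rightarrow> complex) list \<Rightarrow> bool" where
  "admissible_cycle U M gs \<longleftrightarrow>
     (\<forall>g\<in>set gs. valid_path g \<and> pathfinish g = pathstart g \<and> path_image g \<subseteq> U - spec M) \<and>
     (\<forall>z\<in>spec M. (\<Sum>g\<leftarrow>gs. winding_number g z) = 1) \<and>
     (\<forall>z. z \<notin> U \<longrightarrow> (\<Sum>g\<leftarrow>gs. winding_number g z) = 0)"

definition matfun :: "(complex \<Rightarrow> complex) \<Rightarrow> complex mat \<Rightarrow> complex mat" where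
  "matfun f M =
     (let gs = (SOME gs. \<exists>U. open U \<and> spec M \<subseteq> U \<and> f holomorphic_on U \<and> admissible_cycle U M gs)
      in mat (dim_row M) (dim_row M)
           (\<lambda>(i,j). (1 / (2 * pi * \<i>)) *
                    (\<Sum>g\<leftarrow>gs. contour_integral g (\<lambda>z. f z * resolvent z M $$ (i,j)))))"

end

theory Submission
  imports Defs
begin

text \<open>
  Because T is upper triangular, the leading block of S U = Q T reads S U_d = Q_d T_d, and as Q_d
  has orthonormal columns the pseudoinverse of S U_d is the left inverse T_d^-1 Q_d^T.  Applied to
  the sketched Arnoldi relation S A U_d = S U_d H_d + h (S u_{d+1}) e_d^T, where
  S u_{d+1} = Q_d t + tau_{d+1} q and Q_d^T q = 0, it yields H_d + r e_d^T; applied to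
  S b = |b| S U_d e_1 it yields |b| e_1.
  For the second representation, T_d r = h t and e_d^T T_d^-1 = e_d^T / tau_d turn
  T_d (H_d + r e_d^T) T_d^-1 into Hhat_d + that e_d^T.  The Cauchy-integral matrix function
  commutes with similarity because the resolvent does, T_d^-1 e_1 = e_1 / tau_1, and
  |S b| = |b| tau_1 because S b = |b| tau_1 q_1.
\<close>

section \<open>Inverses, spectra and resolvents\<close>

lemma mat_inv_eqI:
  fixes N X :: "'a::field mat"
  assumes N: "N \<in> carrier_mat m m" and X: "X \<in> carrier_mat m m"
    and NX: "N * X = 1\<^sub>m m" and XN: "X * N = 1\<^sub>m m"
  shows "mat_inv N = X"
  unfolding mat_inv_def
proof (rule the_equality)
  show "X \<in> carrier_mat (dim_row N) (dim_row N) \<and> N * X = 1\<^sub>m (dim_row N) \<and> X * N = 1\<^sub>m (dim_row N)"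
    using N X NX XN by auto
next
  fix Y assume "Y \<in> carrier_mat (dim_row N) (dim_row N) \<and> N * Y = 1\<^sub>m (dim_row N) \<and> Y * N = 1\<^sub>m (dim_row N)"
  hence Y: "Y \<in> carrier_mat m m" "Y * N = 1\<^sub>m m" using N by auto
  have "Y = Y * (N * X)" using NX Y by simp
  also have "\<dots> = (Y * N) * X" using assoc_mult_mat[OF Y(1) N X] by simp
  also have "\<dots> = X" using Y X by simp
  finally show "Y = X" .
qed

lemma adj_mat_scaled_inverse:
  fixes N :: "'a::field mat"
  assumes N: "N \<in> carrier_mat m m" and det: "det N \<noteq> 0"
  shows "(1 / det N) \<cdot>\<^sub>m adj_mat N \<in> carrier_mat m m"
    and "N * ((1 / det N) \<cdot>\<^sub>m adj_mat N) = 1\<^sub>m m"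
    and "(1 / det N) \<cdot>\<^sub>m adj_mat N * N = 1\<^sub>m m"
proof -
  note adj = adj_mat[OF N]
  show "(1 / det N) \<cdot>\<^sub>m adj_mat N \<in> carrier_mat m m" using adj by auto
  show "N * ((1 / det N) \<cdot>\<^sub>m adj_mat N) = 1\<^sub>m m"
    using mult_smult_distrib[OF N adj(1)] adj det by (auto intro!: eq_matI)
  show "(1 / det N) \<cdot>\<^sub>m adj_mat N * N = 1\<^sub>m m"
    using mult_smult_assoc_mat[OF adj(1) N] adj det by (auto intro!: eq_matI)
qed

lemma mat_inv_eq_adj:
  fixes N :: "'a::field mat"
  assumes N: "N \<in> carrier_mat m m" and det: "det N \<noteq> 0"
  shows "mat_inv N = (1 / det N) \<cdot>\<^sub>m adj_mat N"
  by (rule mat_inv_eqI[OF N adj_mat_scaled_inverse[OF N det]])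

lemma mat_inv_nonsingular:
  fixes N :: "'a::field mat"
  assumes N: "N \<in> carrier_mat m m" and det: "det N \<noteq> 0"
  shows "mat_inv N \<in> carrier_mat m m" "N * mat_inv N = 1\<^sub>m m" "mat_inv N * N = 1\<^sub>m m"
  unfolding mat_inv_eq_adj[OF N det] by (rule adj_mat_scaled_inverse[OF N det])+

lemma mat_inv_similar:
  fixes N P Pi :: "'a::field mat"
  assumes N: "N \<in> carrier_mat m m" and det: "det N \<noteq> 0"
    and P: "P \<in> carrier_mat m m" and Pi: "Pi \<in> carrier_mat m m"
    and PPi: "P * Pi = 1\<^sub>m m" and PiP: "Pi * P = 1\<^sub>m m"
  shows "mat_inv (P * N * Pi) = P * mat_inv N * Pi"
proof (rule mat_inv_eqI)
  note inv = mat_inv_nonsingular[OF N det]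
  show "P * N * Pi \<in> carrier_mat m m" "P * mat_inv N * Pi \<in> carrier_mat m m"
    using N P Pi inv by auto
  have "P * N * Pi * (P * mat_inv N * Pi) = P * (N * (Pi * P) * mat_inv N) * Pi"
    using P N Pi inv by (simp add: assoc_mult_mat[of _ m m _ m _ m])
  also have "\<dots> = 1\<^sub>m m" using N P inv PiP PPi by simp
  finally show "P * N * Pi * (P * mat_inv N * Pi) = 1\<^sub>m m" .
  have "P * mat_inv N * Pi * (P * N * Pi) = P * (mat_inv N * (Pi * P) * N) * Pi"
    using P N Pi inv by (simp add: assoc_mult_mat[of _ m m _ m _ m])
  also have "\<dots> = 1\<^sub>m m" using N P inv PiP PPi by simp
  finally show "P * mat_inv N * Pi * (P * N * Pi) = 1\<^sub>m m" .
qed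

lemma spec_iff_det:
  fixes M :: "complex mat"
  assumes M: "M \<in> carrier_mat m m"
  shows "z \<in> spec M \<longleftrightarrow> det (z \<cdot>\<^sub>m 1\<^sub>m m - M) = 0"
proof -
  have "- char_matrix M z = z \<cdot>\<^sub>m 1\<^sub>m m - M"
    using M unfolding char_matrix_def by (auto intro!: eq_matI)
  thus ?thesis
    unfolding spec_def mem_Collect_eq eigenvalue_root_char_poly[OF M] char_poly_matrix[OF M] by simp
qed

lemma finite_spec:
  fixes M :: "complex mat"
  assumes M: "M \<in> carrier_mat m m"
  shows "finite (spec M)"
proof -
  have "char_poly M \<noteq> 0" using degree_monic_char_poly[OF M] by auto
  hence "finite {z. poly (char_poly M) z = 0}" by (rule poly_roots_finite)
  moreover have "spec M = {z. poly (char_poly M) z = 0}"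
    unfolding spec_def using eigenvalue_root_char_poly[OF M] by auto
  ultimately show ?thesis by simp
qed

lemma spec_similar:
  fixes M P Pi :: "complex mat"
  assumes M: "M \<in> carrier_mat m m" and P: "P \<in> carrier_mat m m" and Pi: "Pi \<in> carrier_mat m m"
    and PPi: "P * Pi = 1\<^sub>m m" and PiP: "Pi * P = 1\<^sub>m m"
  shows "spec (P * M * Pi) = spec M"
proof -
  have PMPi: "P * M * Pi \<in> carrier_mat m m" using M P Pi by auto
  have "similar_mat (P * M * Pi) M"
    using M P Pi PMPi PPi PiP by (intro similar_matI[of _ _ P Pi m]) auto
  hence "char_poly (P * M * Pi) = char_poly M" by (rule char_poly_similar)
  thus ?thesis
    unfolding spec_def using eigenvalue_root_char_poly[OF M] eigenvalue_root_char_poly[OF PMPi] by auto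
qed

lemma resolvent_similar:
  fixes M P Pi :: "complex mat"
  assumes M: "M \<in> carrier_mat m m" and P: "P \<in> carrier_mat m m" and Pi: "Pi \<in> carrier_mat m m"
    and PPi: "P * Pi = 1\<^sub>m m" and PiP: "Pi * P = 1\<^sub>m m" and z: "z \<notin> spec M"
  shows "resolvent z (P * M * Pi) = P * resolvent z M * Pi"
proof -
  have N: "z \<cdot>\<^sub>m 1\<^sub>m m - M \<in> carrier_mat m m" using M by auto
  have "P * (z \<cdot>\<^sub>m 1\<^sub>m m - M) = z \<cdot>\<^sub>m P - P * M"
    using P M by (simp add: mult_minus_distrib_mat[OF P _ M] mult_smult_distrib[OF P one_carrier_mat])
  hence "P * (z \<cdot>\<^sub>m 1\<^sub>m m - M) * Pi = z \<cdot>\<^sub>m (P * Pi) - P * M * Pi"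
    using P M Pi minus_mult_distrib_mat[of "z \<cdot>\<^sub>m P" m m "P * M" Pi m]
      mult_smult_assoc_mat[OF P Pi] by simp
  hence "z \<cdot>\<^sub>m 1\<^sub>m m - P * M * Pi = P * (z \<cdot>\<^sub>m 1\<^sub>m m - M) * Pi" using PPi by simp
  moreover have "det (z \<cdot>\<^sub>m 1\<^sub>m m - M) \<noteq> 0" using spec_iff_det[OF M] z by blast
  ultimately show ?thesis
    unfolding resolvent_def using M P Pi mat_inv_similar[OF N _ P Pi PPi PiP] by simp
qed

lemma det_holomorphic:
  fixes G :: "complex \<Rightarrow> complex mat"
  assumes G: "\<And>z. G z \<in> carrier_mat m m"
    and hol: "\<And>i j. i < m \<Longrightarrow> j < m \<Longrightarrow> (\<lambda>z. G z $$ (i,j)) holomorphic_on S"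
  shows "(\<lambda>z. det (G z)) holomorphic_on S"
proof -
  have det: "(\<lambda>z. det (G z)) =
      (\<lambda>z. \<Sum>p \<in> {p. p permutes {0..<m}}. signof p * (\<Prod>i = 0..<m. G z $$ (i, p i)))"
    using det_def'[OF G] by auto
  show ?thesis unfolding det
  proof (intro holomorphic_on_sum holomorphic_on_mult holomorphic_on_const holomorphic_on_prod)
    fix p i assume "p \<in> {p. p permutes {0..<m}}" and i: "i \<in> {0..<m}"
    hence "p i < m" using permutes_in_image by fastforce
    thus "(\<lambda>z. G z $$ (i, p i)) holomorphic_on S" using hol i by auto
  qed
qed

lemma mat_delete_entry_holomorphic:
  fixes G :: "complex \<Rightarrow> complex mat"
  assumes G: "\<And>z. G z \<in> carrier_mat m m"
    and hol: "\<And>i j. i < m \<Longrightarrow> j < m \<Longrightarrow> (\<lambda>z. G z $$ (i,j)) holomorphic_on S"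
    and i: "i < m - 1" and j: "j < m - 1"
  shows "(\<lambda>z. mat_delete (G z) k l $$ (i,j)) holomorphic_on S"
proof -
  have "(\<lambda>z. mat_delete (G z) k l $$ (i,j)) = (\<lambda>z. G z $$ (insert_index k i, insert_index l j))"
  proof
    fix z show "mat_delete (G z) k l $$ (i,j) = G z $$ (insert_index k i, insert_index l j)"
      using G[of z] i j unfolding mat_delete_def insert_index_def by auto
  qed
  moreover have "insert_index k i < m" "insert_index l j < m"
    using i j unfolding insert_index_def by auto
  ultimately show ?thesis using hol by simp
qed

lemma resolvent_entry_holomorphic:
  fixes M :: "complex mat"
  assumes M: "M \<in> carrier_mat m m" and k: "k < m" and l: "l < m"
  shows "(\<lambda>z. resolvent z M $$ (k,l)) holomorphic_on (- spec M)"
proof -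
  define N where "N z = z \<cdot>\<^sub>m 1\<^sub>m m - M" for z
  have N: "N z \<in> carrier_mat m m" for z using M unfolding N_def by auto
  have N_hol: "(\<lambda>z. N z $$ (i,j)) holomorphic_on - spec M" if "i < m" "j < m" for i j
    using M that unfolding N_def by (cases "i = j") (auto intro!: holomorphic_intros)
  have det_N: "det (N z) \<noteq> 0" if "z \<in> - spec M" for z
    using that spec_iff_det[OF M] unfolding N_def by auto
  have cofactor: "resolvent z M $$ (k,l) = (-1)^(l+k) * det (mat_delete (N z) l k) / det (N z)"
    if "z \<in> - spec M" for z
    using k l N[of z] M det_N[OF that] mat_inv_eq_adj[OF N det_N[OF that]]
    unfolding resolvent_def N_def adj_mat_def cofactor_def by auto
  have "(\<lambda>z. (-1)^(l+k) * det (mat_delete (N z) l k) / det (N z)) holomorphic_on - spec M"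
    using det_N mat_delete_carrier[OF N]
    by (intro holomorphic_intros det_holomorphic[OF N N_hol] det_holomorphic
        mat_delete_entry_holomorphic[OF N N_hol]) auto
  thus ?thesis by (rule holomorphic_transform) (rule cofactor[symmetric])
qed

section \<open>Admissible cycles\<close>

lemma eventually_cball_subset:
  fixes e :: "'a::metric_space"
  assumes "open V" "e \<in> V"
  shows "eventually (\<lambda>\<epsilon>. cball e \<epsilon> \<subseteq> V) (at_right 0)"
proof -
  obtain r where r: "r > 0" "ball e r \<subseteq> V" using assms open_contains_ball by blast
  have "cball e \<epsilon> \<subseteq> ball e r" if "\<epsilon> < r" for \<epsilon>
    using that by (intro subsetI) simp
  hence "cball e \<epsilon> \<subseteq> V" if "\<epsilon> < r" for \<epsilon>
    using r(2) that by blast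
  thus ?thesis unfolding eventually_at_right_field using r(1) by (intro exI[of _ r]) simp
qed

lemma eventually_separated:
  fixes e e' :: "'a::metric_space"
  shows "eventually (\<lambda>\<epsilon>. e \<noteq> e' \<longrightarrow> 2 * \<epsilon> < dist e e') (at_right 0)"
proof (cases "e = e'")
  case False
  hence "dist e e' > 0" by simp
  thus ?thesis unfolding eventually_at_right_field
    by (intro exI[of _ "dist e e' / 2"]) (simp add: field_simps)
qed simp

lemma finite_separated_cballs:
  fixes E :: "'a::metric_space set"
  assumes E: "finite E" and V: "open V" "E \<subseteq> V"
  shows "\<exists>\<epsilon>>0. (\<forall>e\<in>E. cball e \<epsilon> \<subseteq> V) \<and> (\<forall>e\<in>E. \<forall>e'\<in>E. e \<noteq> e' \<longrightarrow> 2 * \<epsilon> < dist e e')"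
proof -
  have "eventually (\<lambda>\<epsilon>. \<forall>e\<in>E. cball e \<epsilon> \<subseteq> V) (at_right 0)"
    using E V by (intro eventually_ball_finite ballI eventually_cball_subset) auto
  moreover have "eventually (\<lambda>\<epsilon>. \<forall>e\<in>E. \<forall>e'\<in>E. e \<noteq> e' \<longrightarrow> 2 * \<epsilon> < dist e e') (at_right 0)"
    using E by (intro eventually_ball_finite ballI eventually_separated)
  moreover have "eventually (\<lambda>\<epsilon>. \<epsilon> > 0) (at_right (0::real))"
    by (rule eventually_at_right_less)
  ultimately have "eventually (\<lambda>\<epsilon>. \<epsilon> > 0 \<and> (\<forall>e\<in>E. cball e \<epsilon> \<subseteq> V) \<and>
      (\<forall>e\<in>E. \<forall>e'\<in>E. e \<noteq> e' \<longrightarrow> 2 * \<epsilon> < dist e e')) (at_right 0)"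
    by (simp add: eventually_conj)
  from eventually_happens'[OF trivial_limit_at_right_real this] show ?thesis by blast
qed

lemma admissible_cycle_exists:
  fixes M :: "complex mat"
  assumes M: "M \<in> carrier_mat m m" and V: "open V" "spec M \<subseteq> V"
  shows "\<exists>gs. admissible_cycle V M gs"
proof -
  define E where "E = spec M"
  have E: "finite E" unfolding E_def by (rule finite_spec[OF M])
  obtain \<epsilon> where \<epsilon>: "\<epsilon> > 0" "\<forall>e\<in>E. cball e \<epsilon> \<subseteq> V"
    and apart: "\<forall>e\<in>E. \<forall>e'\<in>E. e \<noteq> e' \<longrightarrow> 2 * \<epsilon> < dist e e'"
    using finite_separated_cballs[OF E V(1)] V(2) unfolding E_def by blast
  obtain es where es: "set es = E" "distinct es" using finite_distinct_list[OF E] by blast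
  define gs where "gs = map (\<lambda>e. circlepath e \<epsilon>) es"
  have winding_outside: "winding_number (circlepath e \<epsilon>) z = 0" if "z \<notin> cball e \<epsilon>" for e z
    using that \<epsilon>(1) by (intro winding_number_zero_outside[of _ "cball e \<epsilon>"]) auto
  have winding_sum: "(\<Sum>g\<leftarrow>gs. winding_number g z) = (\<Sum>e\<in>E. winding_number (circlepath e \<epsilon>) z)"
    for z unfolding gs_def map_map o_def using sum_list_distinct_conv_sum_set[OF es(2)] es(1) by simp
  have "admissible_cycle V M gs"
    unfolding admissible_cycle_def
  proof (intro conjI ballI allI impI)
    fix g assume "g \<in> set gs"
    then obtain e where e: "e \<in> E" "g = circlepath e \<epsilon>" unfolding gs_def using es by auto
    show "valid_path g" "pathfinish g = pathstart g" using e by auto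
    show "path_image g \<subseteq> V - spec M"
    proof
      fix x assume "x \<in> path_image g"
      hence x: "dist e x = \<epsilon>" using e \<epsilon>(1) by (auto simp: path_image_circlepath_nonneg)
      hence "x \<in> cball e \<epsilon>" by simp
      hence "x \<in> V" using \<epsilon>(2) e(1) by blast
      moreover have "x \<notin> E"
      proof
        assume xE: "x \<in> E"
        have "e \<noteq> x" using x \<epsilon>(1) by auto
        hence "2 * \<epsilon> < dist e x" using apart e(1) xE by simp
        thus False using x \<epsilon>(1) by simp
      qed
      ultimately show "x \<in> V - spec M" unfolding E_def by auto
    qed
  next
    fix z assume "z \<in> spec M"
    hence z: "z \<in> E" unfolding E_def .
    have "(\<Sum>e\<in>E - {z}. winding_number (circlepath e \<epsilon>) z) = 0"
    proof (intro sum.neutral ballI winding_outside)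
      fix e assume "e \<in> E - {z}"
      hence "2 * \<epsilon> < dist e z" using apart z by blast
      thus "z \<notin> cball e \<epsilon>" using \<epsilon>(1) by simp
    qed
    moreover have "winding_number (circlepath z \<epsilon>) z = 1"
      using \<epsilon>(1) by (rule winding_number_circlepath_centre)
    ultimately show "(\<Sum>g\<leftarrow>gs. winding_number g z) = 1"
      unfolding winding_sum sum.remove[OF E z] by simp
  next
    fix z assume z: "z \<notin> V"
    have "(\<Sum>e\<in>E. winding_number (circlepath e \<epsilon>) z) = 0"
    proof (intro sum.neutral ballI winding_outside)
      fix e assume "e \<in> E"
      thus "z \<notin> cball e \<epsilon>" using \<epsilon>(2) z by blast
    qed
    thus "(\<Sum>g\<leftarrow>gs. winding_number g z) = 0" unfolding winding_sum .
  qed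
  thus ?thesis by blast
qed

section \<open>Matrix functions commute with similarity\<close>

lemma triple_product_entry:
  fixes A B C :: "'a::comm_ring_1 mat"
  assumes "A \<in> carrier_mat n n" "B \<in> carrier_mat n n" "C \<in> carrier_mat n n" "i < n" "j < n"
  shows "(A * B * C) $$ (i,j) = (\<Sum>l = 0..<n. \<Sum>k = 0..<n. A $$ (i,k) * B $$ (k,l) * C $$ (l,j))"
  using assms by (simp add: scalar_prod_def sum_distrib_left mult.assoc) (rule sum.swap)

lemma sum_list_sum_swap:
  "(\<Sum>g\<leftarrow>gs. \<Sum>l\<in>L. h g l) = (\<Sum>l\<in>L. \<Sum>g\<leftarrow>gs. (h g l :: 'a::comm_monoid_add))"
  by (induction gs) (auto simp: sum.distrib)

lemma resolvent_carrier:
  fixes M :: "complex mat"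
  assumes M: "M \<in> carrier_mat m m" and z: "z \<notin> spec M"
  shows "resolvent z M \<in> carrier_mat m m"
proof -
  have "det (z \<cdot>\<^sub>m 1\<^sub>m m - M) \<noteq> 0" using spec_iff_det[OF M] z by blast
  hence "mat_inv (z \<cdot>\<^sub>m 1\<^sub>m m - M) \<in> carrier_mat m m"
    using M by (intro mat_inv_nonsingular(1)) auto
  thus ?thesis unfolding resolvent_def using M by simp
qed

lemma contour_integrable_resolvent_entry:
  fixes M :: "complex mat"
  assumes M: "M \<in> carrier_mat m m" and U: "open U" "f holomorphic_on U"
    and g: "valid_path g" "path_image g \<subseteq> U - spec M" and k: "k < m" and l: "l < m"
  shows "(\<lambda>z. f z * resolvent z M $$ (k,l)) contour_integrable_on g"
proof (rule contour_integrable_holomorphic_simple[OF _ _ g])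
  show "open (U - spec M)" using U(1) finite_spec[OF M] by (intro open_Diff finite_imp_closed)
  show "(\<lambda>z. f z * resolvent z M $$ (k,l)) holomorphic_on U - spec M"
    using holomorphic_on_subset[OF U(2)] holomorphic_on_subset[OF resolvent_entry_holomorphic[OF M k l]]
    by (intro holomorphic_on_mult) (auto simp: Diff_eq)
qed

lemma contour_integral_resolvent_similar:
  fixes M P Pi :: "complex mat"
  assumes M: "M \<in> carrier_mat m m" and P: "P \<in> carrier_mat m m" and Pi: "Pi \<in> carrier_mat m m"
    and PPi: "P * Pi = 1\<^sub>m m" and PiP: "Pi * P = 1\<^sub>m m"
    and U: "open U" "f holomorphic_on U" and g: "valid_path g" "path_image g \<subseteq> U - spec M"
    and i: "i < m" and j: "j < m"
  shows "contour_integral g (\<lambda>z. f z * resolvent z (P * M * Pi) $$ (i,j)) =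
    (\<Sum>l = 0..<m. \<Sum>k = 0..<m. P $$ (i,k) * contour_integral g (\<lambda>z. f z * resolvent z M $$ (k,l)) * Pi $$ (l,j))"
proof -
  define R where "R k l z = f z * resolvent z M $$ (k,l)" for k l z
  have R: "R k l contour_integrable_on g" if "k \<in> {0..<m}" "l \<in> {0..<m}" for k l
    unfolding R_def using that by (intro contour_integrable_resolvent_entry[OF M U g]) auto
  have "contour_integral g (\<lambda>z. f z * resolvent z (P * M * Pi) $$ (i,j)) =
      contour_integral g (\<lambda>z. \<Sum>l = 0..<m. \<Sum>k = 0..<m. (P $$ (i,k) * Pi $$ (l,j)) * R k l z)"
  proof (rule contour_integral_eq)
    fix z assume "z \<in> path_image g"
    hence z: "z \<notin> spec M" using g(2) by blast
    note R_carrier = resolvent_carrier[OF M z]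
    show "f z * resolvent z (P * M * Pi) $$ (i,j) =
        (\<Sum>l = 0..<m. \<Sum>k = 0..<m. (P $$ (i,k) * Pi $$ (l,j)) * R k l z)"
      unfolding resolvent_similar[OF M P Pi PPi PiP z] triple_product_entry[OF P R_carrier Pi i j] R_def
        sum_distrib_left by (intro sum.cong refl) (simp only: mult_ac)
  qed
  also have "\<dots> = (\<Sum>l = 0..<m. contour_integral g (\<lambda>z. \<Sum>k = 0..<m. (P $$ (i,k) * Pi $$ (l,j)) * R k l z))"
    by (rule contour_integral_sum) (auto intro!: contour_integrable_sum contour_integrable_lmul R)
  also have "\<dots> = (\<Sum>l = 0..<m. \<Sum>k = 0..<m. (P $$ (i,k) * Pi $$ (l,j)) * contour_integral g (R k l))"
  proof (rule sum.cong[OF refl])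
    fix l assume l: "l \<in> {0..<m}"
    have "contour_integral g (\<lambda>z. \<Sum>k = 0..<m. (P $$ (i,k) * Pi $$ (l,j)) * R k l z) =
        (\<Sum>k = 0..<m. contour_integral g (\<lambda>z. (P $$ (i,k) * Pi $$ (l,j)) * R k l z))"
      by (rule contour_integral_sum) (auto intro!: contour_integrable_lmul R l)
    also have "\<dots> = (\<Sum>k = 0..<m. (P $$ (i,k) * Pi $$ (l,j)) * contour_integral g (R k l))"
      by (intro sum.cong refl contour_integral_lmul R l)
    finally show "contour_integral g (\<lambda>z. \<Sum>k = 0..<m. (P $$ (i,k) * Pi $$ (l,j)) * R k l z) =
        (\<Sum>k = 0..<m. (P $$ (i,k) * Pi $$ (l,j)) * contour_integral g (R k l))" .
  qed
  finally show ?thesis unfolding R_def by (simp only: mult_ac)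
qed

lemma matfun_similar:
  fixes M P Pi :: "complex mat"
  assumes M: "M \<in> carrier_mat m m" and P: "P \<in> carrier_mat m m" and Pi: "Pi \<in> carrier_mat m m"
    and PPi: "P * Pi = 1\<^sub>m m" and PiP: "Pi * P = 1\<^sub>m m"
    and f: "\<exists>V. open V \<and> spec M \<subseteq> V \<and> f holomorphic_on V"
  shows "matfun f (P * M * Pi) = P * matfun f M * Pi"
proof -
  have PMPi: "P * M * Pi \<in> carrier_mat m m" using P M Pi by auto
  have spec: "spec (P * M * Pi) = spec M" by (rule spec_similar[OF M P Pi PPi PiP])
  have admissible_cycle: "admissible_cycle V (P * M * Pi) = admissible_cycle V M" for V
    unfolding admissible_cycle_def[abs_def] spec ..
  (* The cycle chosen in matfun depends on the matrix only through its spectrum,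
     so both sides are integrals over the same contours. *)
  define gs where "gs = (SOME gs. \<exists>U. open U \<and> spec M \<subseteq> U \<and> f holomorphic_on U \<and> admissible_cycle U M gs)"
  have "\<exists>gs U. open U \<and> spec M \<subseteq> U \<and> f holomorphic_on U \<and> admissible_cycle U M gs"
    using f admissible_cycle_exists[OF M] by blast
  hence "\<exists>U. open U \<and> spec M \<subseteq> U \<and> f holomorphic_on U \<and> admissible_cycle U M gs"
    unfolding gs_def by (rule someI_ex)
  then obtain U where U: "open U" "f holomorphic_on U" "admissible_cycle U M gs" by blast
  define c where "c = 1 / (2 * pi * \<i>)"
  define F where "F g k l = contour_integral g (\<lambda>z. f z * resolvent z M $$ (k,l))" for g k l
  have matfun_M: "matfun f M = mat m m (\<lambda>(k,l). c * (\<Sum>g\<leftarrow>gs. F g k l))"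
    unfolding matfun_def Let_def gs_def[symmetric] F_def c_def using M by simp
  have matfun_PMPi: "matfun f (P * M * Pi) = mat m m (\<lambda>(i,j).
      c * (\<Sum>g\<leftarrow>gs. contour_integral g (\<lambda>z. f z * resolvent z (P * M * Pi) $$ (i,j))))"
    unfolding matfun_def Let_def spec admissible_cycle gs_def[symmetric] c_def using PMPi P by simp
  show ?thesis
  proof (rule eq_matI)
    fix i j assume "i < dim_row (P * matfun f M * Pi)" "j < dim_col (P * matfun f M * Pi)"
    hence ij: "i < m" "j < m" using P Pi by auto
    have "matfun f (P * M * Pi) $$ (i,j) =
        c * (\<Sum>g\<leftarrow>gs. \<Sum>l = 0..<m. \<Sum>k = 0..<m. P $$ (i,k) * F g k l * Pi $$ (l,j))"
      unfolding matfun_PMPi F_def using ij U(3)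
      by (auto simp: admissible_cycle_def intro!: arg_cong[where f = sum_list] map_cong
          contour_integral_resolvent_similar[OF M P Pi PPi PiP U(1,2)])
    also have "\<dots> = (\<Sum>l = 0..<m. \<Sum>k = 0..<m. P $$ (i,k) * (c * (\<Sum>g\<leftarrow>gs. F g k l)) * Pi $$ (l,j))"
      by (simp add: sum_list_sum_swap sum_distrib_left sum_list_const_mult sum_list_mult_const mult_ac)
    also have "\<dots> = (P * matfun f M * Pi) $$ (i,j)"
      using matfun_M triple_product_entry[OF P _ Pi ij, of "matfun f M"] ij by simp
    finally show "matfun f (P * M * Pi) $$ (i,j) = (P * matfun f M * Pi) $$ (i,j)" .
  qed (use P Pi in \<open>auto simp: matfun_def\<close>)
qed

section \<open>Column blocks, triangular factors and pseudoinverses\<close>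

definition leading_block :: "'a mat \<Rightarrow> nat \<Rightarrow> 'a mat" where
  "leading_block T k = mat k k (\<lambda>(i,j). T $$ (i,j))"

lemma leading_block_dim [simp]: "dim_row (leading_block T k) = k" "dim_col (leading_block T k) = k"
  unfolding leading_block_def by simp_all

lemma upper_triangular_leading_block:
  assumes "T \<in> carrier_mat m m" "upper_triangular T" "k \<le> m"
  shows "upper_triangular (leading_block T k)"
  using assms unfolding upper_triangular_def leading_block_def by auto

lemma det_upper_triangular_pos:
  fixes T :: "'a::linordered_idom mat"
  assumes T: "T \<in> carrier_mat m m" "upper_triangular T" and pos: "\<forall>i<m. T $$ (i,i) > 0"
  shows "det T > 0"
proof -
  have prod_list_pos: "prod_list xs > 0" if "\<forall>x\<in>set xs. x > 0" for xs :: "'a list"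
    using that by (induction xs) auto
  have "prod_list (diag_mat T) > 0" using T pos unfolding diag_mat_def by (intro prod_list_pos) auto
  thus ?thesis using det_upper_triangular[OF T(2,1)] by simp
qed

lemma det_leading_block_pos:
  fixes T :: "'a::linordered_idom mat"
  assumes T: "T \<in> carrier_mat m m" "upper_triangular T" and pos: "\<forall>i<m. T $$ (i,i) > 0"
    and k: "k \<le> m"
  shows "det (leading_block T k) > 0"
  using T pos k
  by (intro det_upper_triangular_pos upper_triangular_leading_block) (auto simp: leading_block_def)

lemma upper_triangular_first_col:
  fixes T :: "'a::comm_ring_1 mat"
  assumes T: "T \<in> carrier_mat m m" "upper_triangular T" and m: "0 < m"
  shows "T *\<^sub>v unit_vec m 0 = T $$ (0,0) \<cdot>\<^sub>v unit_vec m 0"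
  using T m by (intro eq_vecI) (auto simp: upper_triangular_def)

lemma upper_triangular_last_row:
  fixes T :: "'a::comm_ring_1 mat"
  assumes T: "T \<in> carrier_mat m m" "upper_triangular T" and m: "0 < m"
  shows "transpose_mat T *\<^sub>v unit_vec m (m - 1) = T $$ (m - 1, m - 1) \<cdot>\<^sub>v unit_vec m (m - 1)"
  using T m by (intro eq_vecI) (auto simp: upper_triangular_def)

lemma mat_inv_eigenvector:
  fixes N :: "'a::field mat"
  assumes N: "N \<in> carrier_mat m m" and det: "det N \<noteq> 0" and v: "v \<in> carrier_vec m"
    and eig: "N *\<^sub>v v = c \<cdot>\<^sub>v v" and c: "c \<noteq> 0"
  shows "mat_inv N *\<^sub>v v = (1 / c) \<cdot>\<^sub>v v"
proof -
  note inv = mat_inv_nonsingular[OF N det]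
  have "mat_inv N *\<^sub>v v = (1 / c) \<cdot>\<^sub>v (mat_inv N *\<^sub>v (c \<cdot>\<^sub>v v))"
    using inv v c by (simp add: mult_mat_vec smult_smult_assoc)
  also have "mat_inv N *\<^sub>v (c \<cdot>\<^sub>v v) = v"
    unfolding eig[symmetric] using inv N v by (simp add: assoc_mult_mat_vec[symmetric])
  finally show ?thesis .
qed

lemma transpose_mat_inv_eigenvector:
  fixes N :: "'a::field mat"
  assumes N: "N \<in> carrier_mat m m" and det: "det N \<noteq> 0" and v: "v \<in> carrier_vec m"
    and eig: "transpose_mat N *\<^sub>v v = c \<cdot>\<^sub>v v" and c: "c \<noteq> 0"
  shows "transpose_mat (mat_inv N) *\<^sub>v v = (1 / c) \<cdot>\<^sub>v v"
proof -
  note inv = mat_inv_nonsingular[OF N det]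
  have "mat_inv (transpose_mat N) = transpose_mat (mat_inv N)"
    using N inv by (intro mat_inv_eqI) (auto simp: transpose_mult[symmetric])
  moreover have "det (transpose_mat N) \<noteq> 0" using det N by (simp add: det_transpose)
  ultimately show ?thesis using mat_inv_eigenvector[of "transpose_mat N" m v c] N v eig c by simp
qed

lemma outer_carrier [simp]: "outer u v \<in> carrier_mat (dim_vec u) (dim_vec v)"
  unfolding outer_def by simp

lemma outer_dim [simp]: "dim_row (outer u v) = dim_vec u" "dim_col (outer u v) = dim_vec v"
  unfolding outer_def by simp_all

lemma mult_outer:
  fixes A :: "'a::comm_ring_1 mat"
  assumes "A \<in> carrier_mat r (dim_vec u)"
  shows "A * outer u v = outer (A *\<^sub>v u) v"
  using assms by (intro eq_matI) (auto simp: outer_def scalar_prod_def sum_distrib_left mult_ac)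

lemma outer_mult:
  fixes B :: "'a::comm_ring_1 mat"
  assumes "B \<in> carrier_mat (dim_vec v) c"
  shows "outer u v * B = outer u (transpose_mat B *\<^sub>v v)"
  using assms by (intro eq_matI) (auto simp: outer_def scalar_prod_def sum_distrib_left mult_ac)

lemma smult_outer: "k \<cdot>\<^sub>m outer u v = outer (k \<cdot>\<^sub>v u) (v :: 'a::comm_ring_1 vec)"
  by (intro eq_matI) (auto simp: outer_def mult_ac)

lemma outer_smult: "outer u (k \<cdot>\<^sub>v v) = outer (k \<cdot>\<^sub>v u) (v :: 'a::comm_ring_1 vec)"
  by (intro eq_matI) (auto simp: outer_def mult_ac)

lemma take_cols_dim [simp]: "dim_row (take_cols M k) = dim_row M" "dim_col (take_cols M k) = k"
  unfolding take_cols_def by simp_all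

lemma take_cols_carrier [simp]: "M \<in> carrier_mat r c \<Longrightarrow> take_cols M k \<in> carrier_mat r k"
  unfolding take_cols_def by auto

lemma take_cols_index [simp]: "i < dim_row M \<Longrightarrow> j < k \<Longrightarrow> take_cols M k $$ (i,j) = M $$ (i,j)"
  unfolding take_cols_def by simp

lemma col_take_cols: "j < k \<Longrightarrow> col (take_cols M k) j = col M j"
  unfolding take_cols_def col_def by (auto intro!: eq_vecI)

lemma mult_unit_vec_col:
  fixes A :: "'a::comm_ring_1 mat"
  assumes "A \<in> carrier_mat r c" "j < c"
  shows "A *\<^sub>v unit_vec c j = col A j"
  using assms by (intro eq_vecI) auto

lemma take_cols_mult:
  assumes "A \<in> carrier_mat r n" "B \<in> carrier_mat n c" "k \<le> c"
  shows "take_cols (A * B) k = A * take_cols B k"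
proof (rule eq_matI)
  fix i j assume "i < dim_row (A * take_cols B k)" "j < dim_col (A * take_cols B k)"
  thus "take_cols (A * B) k $$ (i,j) = (A * take_cols B k) $$ (i,j)"
    using assms by (simp add: take_cols_index col_take_cols)
qed (use assms in \<open>auto simp: take_cols_def\<close>)

lemma take_cols_mult_upper_triangular:
  fixes Q T :: "'a::comm_ring_1 mat"
  assumes Q: "Q \<in> carrier_mat s m" and T: "T \<in> carrier_mat m m" "upper_triangular T"
    and k: "k \<le> m"
  shows "take_cols (Q * T) k = take_cols Q k * leading_block T k"
proof (rule eq_matI)
  fix i j assume "i < dim_row (take_cols Q k * leading_block T k)"
    "j < dim_col (take_cols Q k * leading_block T k)"
  hence ij: "i < s" "j < k" using Q by auto
  have "take_cols (Q * T) k $$ (i,j) = (\<Sum>l = 0..<m. Q $$ (i,l) * T $$ (l,j))"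
    using Q T ij k by (simp add: take_cols_def scalar_prod_def)
  also have "\<dots> = (\<Sum>l = 0..<k. Q $$ (i,l) * T $$ (l,j))"
    using T ij k by (intro sum.mono_neutral_right) (auto simp: upper_triangular_def)
  also have "\<dots> = (take_cols Q k * leading_block T k) $$ (i,j)"
    using Q ij by (simp add: take_cols_def leading_block_def scalar_prod_def)
  finally show "take_cols (Q * T) k $$ (i,j) = (take_cols Q k * leading_block T k) $$ (i,j)" .
qed (use Q T in auto)

lemma col_mult_split_last:
  fixes Q T :: "'a::comm_ring_1 mat"
  assumes Q: "Q \<in> carrier_mat s (Suc k)" and T: "T \<in> carrier_mat (Suc k) (Suc k)"
  shows "col (Q * T) k = take_cols Q k *\<^sub>v vec k (\<lambda>i. T $$ (i,k)) + T $$ (k,k) \<cdot>\<^sub>v col Q k"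
  using Q T by (intro eq_vecI) (auto simp: take_cols_def scalar_prod_def mult_ac)

lemma orthonormal_take_cols:
  fixes Q :: "'a::comm_ring_1 mat"
  assumes Q: "Q \<in> carrier_mat s m" "transpose_mat Q * Q = 1\<^sub>m m" and k: "k \<le> m"
  shows "transpose_mat (take_cols Q k) * take_cols Q k = 1\<^sub>m k"
    and "k \<le> j \<Longrightarrow> j < m \<Longrightarrow> transpose_mat (take_cols Q k) *\<^sub>v col Q j = 0\<^sub>v k"
proof -
  have QQ: "col Q i \<bullet> col Q j = (if i = j then 1 else 0)" if "i < m" "j < m" for i j
    using arg_cong[OF Q(2), of "\<lambda>X. X $$ (i,j)"] that Q(1) by simp
  show "transpose_mat (take_cols Q k) * take_cols Q k = 1\<^sub>m k"
    using Q(1) k by (intro eq_matI) (auto simp: col_take_cols QQ)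
  show "transpose_mat (take_cols Q k) *\<^sub>v col Q j = 0\<^sub>v k" if "k \<le> j" "j < m"
    using Q(1) k that by (intro eq_vecI) (auto simp: col_take_cols QQ)
qed

lemma pinv_eqI_left_inverse:
  fixes B Y :: "real mat"
  assumes B: "B \<in> carrier_mat s d" and Y: "Y \<in> carrier_mat d s"
    and YB: "Y * B = 1\<^sub>m d" and sym: "transpose_mat (B * Y) = B * Y"
  shows "pinv B = Y"
  unfolding pinv_def
proof (rule the_equality)
  have BYB: "B * Y * B = B" using assoc_mult_mat[OF B Y B] YB B by simp
  show "Y \<in> carrier_mat (dim_col B) (dim_row B) \<and> B * Y * B = B \<and> Y * B * Y = Y \<and>
      transpose_mat (B * Y) = B * Y \<and> transpose_mat (Y * B) = Y * B"
    using B Y BYB sym YB by auto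
  fix X assume "X \<in> carrier_mat (dim_col B) (dim_row B) \<and> B * X * B = B \<and> X * B * X = X \<and>
      transpose_mat (B * X) = B * X \<and> transpose_mat (X * B) = X * B"
  hence X: "X \<in> carrier_mat d s" and BXB: "B * X * B = B" and symX: "transpose_mat (B * X) = B * X"
    using B by auto
  have "B * X = (B * Y * B) * X" using BYB by simp
  also have "\<dots> = (B * Y) * (B * X)" by (rule assoc_mult_mat) (use B X Y in auto)
  also have "\<dots> = transpose_mat (B * X * (B * Y))"
    using sym symX B X Y by (simp add: transpose_mult[of _ s s _ s])
  also have "B * X * (B * Y) = (B * X * B) * Y" by (rule assoc_mult_mat[symmetric]) (use B X Y in auto)
  also have "\<dots> = B * Y" using BXB by simp
  finally have BX: "B * X = B * Y" using sym by simp
  have "X = (Y * B) * X" using YB X by simp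
  also have "\<dots> = Y * (B * X)" using B X Y by (simp add: assoc_mult_mat)
  also have "\<dots> = Y" using BX YB B Y by (simp add: assoc_mult_mat[symmetric])
  finally show "X = Y" .
qed

lemma orthonormal_mult_left_inverse:
  fixes Q T :: "'a::field mat"
  assumes Q: "Q \<in> carrier_mat s d" "transpose_mat Q * Q = 1\<^sub>m d"
    and T: "T \<in> carrier_mat d d" "det T \<noteq> 0"
  shows "mat_inv T * transpose_mat Q * (Q * T) = 1\<^sub>m d"
proof -
  note inv = mat_inv_nonsingular[OF T]
  have "transpose_mat Q * (Q * T) = T"
    using assoc_mult_mat[of "transpose_mat Q" d s Q d T d] Q T by simp
  moreover have "mat_inv T * transpose_mat Q * (Q * T) = mat_inv T * (transpose_mat Q * (Q * T))"
    by (rule assoc_mult_mat) (use Q T inv in auto)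
  ultimately show ?thesis using inv by simp
qed

lemma pinv_orthonormal_mult:
  fixes Q T :: "real mat"
  assumes Q: "Q \<in> carrier_mat s d" "transpose_mat Q * Q = 1\<^sub>m d"
    and T: "T \<in> carrier_mat d d" "det T \<noteq> 0"
  shows "pinv (Q * T) = mat_inv T * transpose_mat Q"
proof (rule pinv_eqI_left_inverse)
  note inv = mat_inv_nonsingular[OF T]
  show "Q * T \<in> carrier_mat s d" "mat_inv T * transpose_mat Q \<in> carrier_mat d s" using Q T inv by auto
  show "mat_inv T * transpose_mat Q * (Q * T) = 1\<^sub>m d" by (rule orthonormal_mult_left_inverse[OF Q T])
  have "T * (mat_inv T * transpose_mat Q) = transpose_mat Q"
    using assoc_mult_mat[of T d d "mat_inv T" d "transpose_mat Q" s] Q T inv by simp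
  moreover have "Q * T * (mat_inv T * transpose_mat Q) = Q * (T * (mat_inv T * transpose_mat Q))"
    by (rule assoc_mult_mat) (use Q T inv in auto)
  ultimately have "Q * T * (mat_inv T * transpose_mat Q) = Q * transpose_mat Q" by simp
  thus "transpose_mat (Q * T * (mat_inv T * transpose_mat Q)) = Q * T * (mat_inv T * transpose_mat Q)"
    using Q by (simp add: transpose_mult[of Q s d])
qed

lemma vnorm_pos:
  assumes b: "b \<in> carrier_vec n" "b \<noteq> 0\<^sub>v n"
  shows "vnorm b > 0"
proof -
  have bb: "b \<bullet> b = (\<Sum>i = 0..<n. b $ i * b $ i)" using b by (simp add: scalar_prod_def)
  have "b \<bullet> b \<noteq> 0"
  proof
    assume "b \<bullet> b = 0"
    hence "\<forall>i\<in>{0..<n}. b $ i * b $ i = 0" unfolding bb by (subst (asm) sum_nonneg_eq_0_iff) auto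
    hence "b = 0\<^sub>v n" using b by (auto intro!: eq_vecI)
    thus False using b by simp
  qed
  moreover have "b \<bullet> b \<ge> 0" unfolding bb by (auto intro!: sum_nonneg)
  ultimately show ?thesis unfolding vnorm_def by simp
qed

lemma vnorm_orthonormal_mult:
  assumes Q: "Q \<in> carrier_mat s d" "transpose_mat Q * Q = 1\<^sub>m d" and x: "x \<in> carrier_vec d"
  shows "vnorm (Q *\<^sub>v x) = vnorm x"
proof -
  have "(Q *\<^sub>v x) \<bullet> (Q *\<^sub>v x) = (transpose_mat Q *\<^sub>v (Q *\<^sub>v x)) \<bullet> x"
    using transpose_vec_mult_scalar[OF Q(1) x, of "Q *\<^sub>v x"] Q x by simp
  also have "transpose_mat Q *\<^sub>v (Q *\<^sub>v x) = x"
    using assoc_mult_mat_vec[of "transpose_mat Q" d s Q d x] Q x by simp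
  finally show ?thesis using Q x unfolding vnorm_def by simp
qed

lemma vnorm_smult_unit_vec:
  assumes "i < d"
  shows "vnorm (c \<cdot>\<^sub>v unit_vec d i) = \<bar>c\<bar>"
  using assms unfolding vnorm_def by (simp add: power2_eq_square[symmetric])

section \<open>The sketched Krylov basis\<close>

lemma sketched_basis_thin_qr:
  fixes S U Q T :: "real mat" and d :: nat
  defines "Td \<equiv> leading_block T d" and "B \<equiv> S * take_cols U d"
  assumes S: "S \<in> carrier_mat s n" and U: "U \<in> carrier_mat n (d + 1)"
    and Q: "Q \<in> carrier_mat s (d + 1)" "transpose_mat Q * Q = 1\<^sub>m (d + 1)"
    and T: "T \<in> carrier_mat (d + 1) (d + 1)" "upper_triangular T" "\<forall>i<d + 1. T $$ (i,i) > 0"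
    and QR: "S * U = Q * T"
  shows "pinv B \<in> carrier_mat d s"
    and "pinv B * B = 1\<^sub>m d"
    and "pinv B *\<^sub>v (S *\<^sub>v col U d) = mat_inv Td *\<^sub>v vec d (\<lambda>i. T $$ (i,d))"
    and "0 < d \<Longrightarrow> vnorm (S *\<^sub>v (take_cols U d *\<^sub>v (c \<cdot>\<^sub>v unit_vec d 0))) = \<bar>c\<bar> * T $$ (0,0)"
proof -
  define Qd where "Qd = take_cols Q d"
  define t where "t = vec d (\<lambda>i. T $$ (i,d))"
  have Qd: "Qd \<in> carrier_mat s d" "transpose_mat Qd * Qd = 1\<^sub>m d"
    and Qd_last: "transpose_mat Qd *\<^sub>v col Q d = 0\<^sub>v d"
    unfolding Qd_def using orthonormal_take_cols[OF Q] Q(1) by auto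
  have Td: "Td \<in> carrier_mat d d" "det Td \<noteq> 0"
    unfolding Td_def using det_leading_block_pos[OF T, of d] by auto
  note inv = mat_inv_nonsingular[OF Td]
  have B: "B = Qd * Td"
    unfolding B_def Qd_def Td_def using take_cols_mult[OF S U, of d] QR
      take_cols_mult_upper_triangular[OF Q(1) T(1,2), of d] by simp
  have pinv: "pinv B = mat_inv Td * transpose_mat Qd"
    unfolding B by (rule pinv_orthonormal_mult[OF Qd Td])
  show "pinv B \<in> carrier_mat d s" unfolding pinv using inv(1) Qd(1) by simp
  show "pinv B * B = 1\<^sub>m d"
    unfolding pinv unfolding B by (rule orthonormal_mult_left_inverse[OF Qd Td])
  have "S *\<^sub>v col U d = col (Q * T) d" using col_mult2[OF S U, of d] QR by simp
  also have "\<dots> = Qd *\<^sub>v t + T $$ (d,d) \<cdot>\<^sub>v col Q d"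
    unfolding Qd_def t_def using col_mult_split_last[of Q s d T] Q T by simp
  finally have Su: "S *\<^sub>v col U d = Qd *\<^sub>v t + T $$ (d,d) \<cdot>\<^sub>v col Q d" .
  have q: "col Q d \<in> carrier_vec s" using Q(1) by (simp add: carrier_vecI)
  have t: "t \<in> carrier_vec d" unfolding t_def by simp
  have QdT: "transpose_mat Qd \<in> carrier_mat d s" using Qd by simp
  have "transpose_mat Qd *\<^sub>v (S *\<^sub>v col U d) =
      transpose_mat Qd *\<^sub>v (Qd *\<^sub>v t) + T $$ (d,d) \<cdot>\<^sub>v (transpose_mat Qd *\<^sub>v col Q d)"
    unfolding Su using Qd q t by (simp add: mult_add_distrib_mat_vec[OF QdT] mult_mat_vec[OF QdT])
  also have "\<dots> = t"
    using Qd Qd_last t eq_vecI[of "T $$ (d,d) \<cdot>\<^sub>v 0\<^sub>v d" "0\<^sub>v d"]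
    by (simp add: assoc_mult_mat_vec[symmetric, OF QdT Qd(1) t])
  finally have "transpose_mat Qd *\<^sub>v (S *\<^sub>v col U d) = t" .
  thus "pinv B *\<^sub>v (S *\<^sub>v col U d) = mat_inv Td *\<^sub>v vec d (\<lambda>i. T $$ (i,d))"
    unfolding pinv t_def using assoc_mult_mat_vec[OF inv(1) QdT, of "S *\<^sub>v col U d"] S
      mult_mat_vec_carrier[OF S col_carrier_vec[OF _ U, of d]] by simp
  show "vnorm (S *\<^sub>v (take_cols U d *\<^sub>v (c \<cdot>\<^sub>v unit_vec d 0))) = \<bar>c\<bar> * T $$ (0,0)" if d: "0 < d"
  proof -
    define x where "x = c \<cdot>\<^sub>v unit_vec d 0"
    have x: "x \<in> carrier_vec d" unfolding x_def by simp
    have "S *\<^sub>v (take_cols U d *\<^sub>v x) = B *\<^sub>v x"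
      unfolding B_def using U by (intro assoc_mult_mat_vec[symmetric, OF S _ x]) simp
    also have "\<dots> = Qd *\<^sub>v (Td *\<^sub>v x)" unfolding B using Qd Td x by (simp add: assoc_mult_mat_vec)
    also have "Td *\<^sub>v x = (c * T $$ (0,0)) \<cdot>\<^sub>v unit_vec d 0"
    proof -
      have "upper_triangular Td" unfolding Td_def by (rule upper_triangular_leading_block[OF T(1,2)]) simp
      moreover have "Td $$ (0,0) = T $$ (0,0)" unfolding Td_def leading_block_def using d by simp
      ultimately show ?thesis unfolding x_def using upper_triangular_first_col[OF Td(1) _ d]
        by (simp add: mult_mat_vec[OF Td(1)] smult_smult_assoc)
    qed
    finally have "vnorm (S *\<^sub>v (take_cols U d *\<^sub>v x)) = \<bar>c * T $$ (0,0)\<bar>"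
      using vnorm_orthonormal_mult[OF Qd] vnorm_smult_unit_vec[OF d] by simp
    moreover have "T $$ (0,0) > 0" using T(3) by simp
    ultimately show ?thesis unfolding x_def by (simp add: abs_mult)
  qed
qed

lemma left_inverse_sketched_arnoldi:
  fixes A S V H Y :: "'a::field mat"
  assumes A: "A \<in> carrier_mat n n" and S: "S \<in> carrier_mat s n" and V: "V \<in> carrier_mat n d"
    and H: "H \<in> carrier_mat d d" and u: "u \<in> carrier_vec n" and e: "e \<in> carrier_vec d"
    and Y: "Y \<in> carrier_mat d s" and YSV: "Y * (S * V) = 1\<^sub>m d"
    and arnoldi: "A * V = V * H + h \<cdot>\<^sub>m outer u e"
  shows "Y * (S * A * V) = H + outer (h \<cdot>\<^sub>v (Y *\<^sub>v (S *\<^sub>v u))) e"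
proof -
  have O: "outer u e \<in> carrier_mat n d" using u e outer_carrier[of u e] by auto
  have Su: "h \<cdot>\<^sub>v (S *\<^sub>v u) \<in> carrier_vec s" using S u by simp
  have "S * A * V = S * (V * H) + S * (h \<cdot>\<^sub>m outer u e)"
    unfolding assoc_mult_mat[OF S A V] arnoldi by (rule mult_add_distrib_mat[OF S]) (use V H O in auto)
  also have "S * (V * H) = (S * V) * H" by (rule assoc_mult_mat[symmetric, OF S V H])
  also have "S * (h \<cdot>\<^sub>m outer u e) = outer (h \<cdot>\<^sub>v (S *\<^sub>v u)) e"
    using mult_smult_distrib[OF S O] mult_outer[of S s u e] S u by (simp add: smult_outer)
  finally have "Y * (S * A * V) = Y * ((S * V) * H) + Y * outer (h \<cdot>\<^sub>v (S *\<^sub>v u)) e"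
    by (simp only:) (rule mult_add_distrib_mat[OF Y], use S V H Su e in auto)
  also have "Y * ((S * V) * H) = H" using assoc_mult_mat[of Y d s "S * V" d H d] YSV Y S V H by simp
  also have "Y * outer (h \<cdot>\<^sub>v (S *\<^sub>v u)) e = outer (h \<cdot>\<^sub>v (Y *\<^sub>v (S *\<^sub>v u))) e"
    using mult_outer[of Y d "h \<cdot>\<^sub>v (S *\<^sub>v u)" e] mult_mat_vec[OF Y, of "S *\<^sub>v u" h] Y S u by simp
  finally show ?thesis .
qed

lemma rank_one_update_similar:
  fixes P Pi H :: "'a::comm_ring_1 mat"
  assumes P: "P \<in> carrier_mat d d" and Pi: "Pi \<in> carrier_mat d d" and H: "H \<in> carrier_mat d d"
    and r: "r \<in> carrier_vec d" and e: "e \<in> carrier_vec d"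
    and Pr: "P *\<^sub>v r = w" and Pi_e: "transpose_mat Pi *\<^sub>v e = c \<cdot>\<^sub>v e"
  shows "P * (H + outer r e) * Pi = P * H * Pi + outer (c \<cdot>\<^sub>v w) e"
proof -
  have O: "outer r e \<in> carrier_mat d d" using r e outer_carrier[of r e] by auto
  have "P * (H + outer r e) * Pi = (P * H + P * outer r e) * Pi"
    by (simp only: mult_add_distrib_mat[OF P H O])
  also have "\<dots> = P * H * Pi + P * outer r e * Pi"
    by (rule add_mult_distrib_mat[OF _ _ Pi]) (use P H O in auto)
  also have "P * outer r e = outer w e" using mult_outer[of P d r e] P r Pr by simp
  also have "outer w e * Pi = outer (c \<cdot>\<^sub>v w) e"
    using outer_mult[of Pi e d w] Pi e Pi_e by (simp add: outer_smult)
  finally show ?thesis .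
qed

lemma left_inverse_sketch_apply:
  fixes S V Y :: "'a::field mat"
  assumes S: "S \<in> carrier_mat s n" and V: "V \<in> carrier_mat n d" and Y: "Y \<in> carrier_mat d s"
    and YSV: "Y * (S * V) = 1\<^sub>m d" and x: "x \<in> carrier_vec d"
  shows "Y *\<^sub>v (S *\<^sub>v (V *\<^sub>v x)) = x"
proof -
  have "Y *\<^sub>v (S *\<^sub>v (V *\<^sub>v x)) = (Y * (S * V)) *\<^sub>v x"
    using assoc_mult_mat_vec[OF S V x] assoc_mult_mat_vec[OF Y _ x, of "S * V"] S V by simp
  thus ?thesis using YSV x by simp
qed

lemma triangular_similarity_rank_one_update:
  fixes T H :: "real mat" and d :: nat
  defines "e \<equiv> unit_vec d (d - 1)"
  assumes T: "T \<in> carrier_mat d d" "upper_triangular T" and T_pos: "\<forall>i<d. T $$ (i,i) > 0"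
    and d: "0 < d" and H: "H \<in> carrier_mat d d" and t: "t \<in> carrier_vec d"
  shows "T * (H + outer (h \<cdot>\<^sub>v (mat_inv T *\<^sub>v t)) e) * mat_inv T =
    T * H * mat_inv T + outer ((h / T $$ (d - 1, d - 1)) \<cdot>\<^sub>v t) e"
proof -
  have det: "det T \<noteq> 0" using det_upper_triangular_pos[OF T T_pos] by simp
  note inv = mat_inv_nonsingular[OF T(1) det]
  have e: "e \<in> carrier_vec d" unfolding e_def by simp
  have "T *\<^sub>v (mat_inv T *\<^sub>v t) = t"
    using assoc_mult_mat_vec[OF T(1) inv(1) t, symmetric] inv t by simp
  hence Tr: "T *\<^sub>v (h \<cdot>\<^sub>v (mat_inv T *\<^sub>v t)) = h \<cdot>\<^sub>v t"
    using mult_mat_vec[OF T(1), of "mat_inv T *\<^sub>v t" h] inv t by simp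
  have "transpose_mat (mat_inv T) *\<^sub>v e = (1 / T $$ (d - 1, d - 1)) \<cdot>\<^sub>v e"
    unfolding e_def using T_pos[rule_format, of "d - 1"] d
    by (intro transpose_mat_inv_eigenvector[OF T(1) det] upper_triangular_last_row[OF T d]) auto
  from rank_one_update_similar[OF T(1) inv(1) H _ e Tr this] inv t
  show ?thesis by (simp add: smult_smult_assoc)
qed

lemma cmat_carrier [simp]: "A \<in> carrier_mat nr nc \<Longrightarrow> cmat A \<in> carrier_mat nr nc"
  unfolding cmat_def by simp

lemma cmat_mult: "A \<in> carrier_mat nr n \<Longrightarrow> B \<in> carrier_mat n nc \<Longrightarrow> cmat (A * B) = cmat A * cmat B"
  unfolding cmat_def by (rule of_real_hom.mat_hom_mult)

lemma cmat_one: "cmat (1\<^sub>m n) = 1\<^sub>m n"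
  unfolding cmat_def by (rule of_real_hom.mat_hom_one)

lemma cmat_mult_cvec: "A \<in> carrier_mat nr n \<Longrightarrow> v \<in> carrier_vec n \<Longrightarrow> cmat A *\<^sub>v cvec v = cvec (A *\<^sub>v v)"
  unfolding cmat_def cvec_def by (rule of_real_hom.mult_mat_vec_hom[symmetric])

lemma cvec_smult: "cvec (c \<cdot>\<^sub>v v) = of_real c \<cdot>\<^sub>v cvec v"
  unfolding cvec_def by (intro eq_vecI) auto

lemma cvec_unit_vec: "cvec (unit_vec n i) = unit_vec n i"
  unfolding cvec_def by (intro eq_vecI) (auto simp: unit_vec_def)

lemma matfun_cmat_carrier: "M \<in> carrier_mat m m \<Longrightarrow> matfun f (cmat M) \<in> carrier_mat m m"
  unfolding matfun_def Let_def cmat_def by simp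

lemma mult_cvec_smult_unit_vec:
  fixes V F :: "complex mat"
  assumes V: "V \<in> carrier_mat n d" and F: "F \<in> carrier_mat d d"
  shows "V *\<^sub>v (F *\<^sub>v cvec (c \<cdot>\<^sub>v unit_vec d i)) = of_real c \<cdot>\<^sub>v (V *\<^sub>v (F *\<^sub>v unit_vec d i))"
  using V F by (simp add: cvec_smult cvec_unit_vec mult_mat_vec[OF F] mult_mat_vec[OF V])

lemma matfun_cmat_similar:
  fixes M P Pi :: "real mat"
  assumes M: "M \<in> carrier_mat m m" and P: "P \<in> carrier_mat m m" and Pi: "Pi \<in> carrier_mat m m"
    and PPi: "P * Pi = 1\<^sub>m m" and PiP: "Pi * P = 1\<^sub>m m"
    and f: "\<exists>V. open V \<and> spec (cmat M) \<subseteq> V \<and> f holomorphic_on V"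
  shows "matfun f (cmat (P * M * Pi)) = cmat P * matfun f (cmat M) * cmat Pi"
proof -
  have "cmat P * cmat Pi = 1\<^sub>m m" "cmat Pi * cmat P = 1\<^sub>m m"
    using P Pi PPi PiP by (simp_all flip: cmat_mult add: cmat_one)
  hence "matfun f (cmat P * cmat M * cmat Pi) = cmat P * matfun f (cmat M) * cmat Pi"
    using M P Pi f by (intro matfun_similar) auto
  moreover have "cmat (P * M * Pi) = cmat P * cmat M * cmat Pi"
    using P M Pi cmat_mult[of "P * M" m m Pi m] cmat_mult[of P m m M m] by simp
  ultimately show ?thesis by simp
qed

lemma matfun_basis_change:
  fixes V T M :: "real mat"
  assumes V: "V \<in> carrier_mat n d" and T: "T \<in> carrier_mat d d" "upper_triangular T"
    and T_pos: "\<forall>i<d. T $$ (i,i) > 0" and d: "0 < d" and M: "M \<in> carrier_mat d d"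
    and f: "\<exists>W. open W \<and> spec (cmat M) \<subseteq> W \<and> f holomorphic_on W"
  shows "of_real (\<beta> * T $$ (0,0)) \<cdot>\<^sub>v
      (cmat (V * mat_inv T) *\<^sub>v (matfun f (cmat (T * M * mat_inv T)) *\<^sub>v unit_vec d 0)) =
    of_real \<beta> \<cdot>\<^sub>v (cmat V *\<^sub>v (matfun f (cmat M) *\<^sub>v unit_vec d 0))"
proof -
  define Ti where "Ti = mat_inv T"
  define F where "F = matfun f (cmat M)"
  define e where "e = (unit_vec d 0 :: complex vec)"
  have det: "det T \<noteq> 0" using det_upper_triangular_pos[OF T T_pos] by simp
  note inv = mat_inv_nonsingular[OF T(1) det, folded Ti_def]
  have F: "F \<in> carrier_mat d d" unfolding F_def using M by (rule matfun_cmat_carrier)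
  have e: "e \<in> carrier_vec d" unfolding e_def by simp
  have "Ti *\<^sub>v unit_vec d 0 = (1 / T $$ (0,0)) \<cdot>\<^sub>v unit_vec d 0"
    unfolding Ti_def using T_pos d
    by (intro mat_inv_eigenvector[OF T(1) det] upper_triangular_first_col[OF T d]) auto
  moreover have "cmat Ti *\<^sub>v cvec (unit_vec d 0) = cvec (Ti *\<^sub>v unit_vec d 0)"
    using inv(1) by (rule cmat_mult_cvec) simp
  ultimately have Ti_e: "cmat Ti *\<^sub>v e = of_real (1 / T $$ (0,0)) \<cdot>\<^sub>v e"
    unfolding e_def by (simp add: cvec_smult cvec_unit_vec)
  have TFTi: "(cmat T * F * cmat Ti) *\<^sub>v e \<in> carrier_vec d"
    using mult_carrier_mat[OF mult_carrier_mat[OF cmat_carrier[OF T(1)] F] cmat_carrier[OF inv(1)]] e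
    by simp
  have "cmat (V * Ti) *\<^sub>v ((cmat T * F * cmat Ti) *\<^sub>v e) =
      cmat V *\<^sub>v (cmat Ti *\<^sub>v ((cmat T * F * cmat Ti) *\<^sub>v e))"
    using V inv TFTi assoc_mult_mat_vec[of "cmat V" n d "cmat Ti" d "(cmat T * F * cmat Ti) *\<^sub>v e"]
    by (simp add: cmat_mult)
  also have "cmat Ti *\<^sub>v ((cmat T * F * cmat Ti) *\<^sub>v e) = F *\<^sub>v (cmat Ti *\<^sub>v e)"
  proof -
    have cT: "cmat T \<in> carrier_mat d d" and cTi: "cmat Ti \<in> carrier_mat d d" using T inv by auto
    have TF: "cmat T * F \<in> carrier_mat d d" using cT F by simp
    have "cmat Ti * cmat T = 1\<^sub>m d" using cmat_mult[OF inv(1) T(1)] inv(3) cmat_one[of d] by simp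
    hence "cmat Ti * (cmat T * F) = F" using assoc_mult_mat[OF cTi cT F] F by simp
    hence "cmat Ti * (cmat T * F * cmat Ti) = F * cmat Ti"
      using assoc_mult_mat[OF cTi TF cTi] by simp
    hence "(cmat Ti * (cmat T * F * cmat Ti)) *\<^sub>v e = F *\<^sub>v (cmat Ti *\<^sub>v e)"
      using assoc_mult_mat_vec[OF F cTi e] by simp
    thus ?thesis using assoc_mult_mat_vec[OF cTi mult_carrier_mat[OF TF cTi] e] by simp
  qed
  finally have "cmat (V * Ti) *\<^sub>v ((cmat T * F * cmat Ti) *\<^sub>v e) =
      of_real (1 / T $$ (0,0)) \<cdot>\<^sub>v (cmat V *\<^sub>v (F *\<^sub>v e))"
    unfolding Ti_e using V F e mult_mat_vec[OF F e] mult_mat_vec[OF cmat_carrier[OF V], of "F *\<^sub>v e"]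
    by simp
  moreover have "matfun f (cmat (T * M * Ti)) = cmat T * F * cmat Ti"
    unfolding F_def using matfun_cmat_similar[OF M T(1) inv(1-3) f] .
  moreover have "T $$ (0,0) > 0" using T_pos d by simp
  ultimately show ?thesis
    unfolding Ti_def[symmetric] F_def[symmetric] e_def[symmetric] by (simp add: smult_smult_assoc)
qed

theorem mainTheorem2:
  fixes n s d :: nat
    and A :: "real mat" and b :: "real vec" and U :: "real mat" and H :: "real mat"
    and h :: real and S :: "real mat" and Q :: "real mat" and T :: "real mat"
    and f :: "complex \<Rightarrow> complex"
  defines "Ud \<equiv> take_cols U d"
    and "u \<equiv> col U d"
    and "Td \<equiv> mat d d (\<lambda>(i,j). T $$ (i,j))"
    and "t \<equiv> vec d (\<lambda>i. T $$ (i, d))"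
    and "ed \<equiv> unit_vec d (d - 1) :: real vec"
    and "e1 \<equiv> unit_vec d 0 :: complex vec"
  defines "r \<equiv> h \<cdot>\<^sub>v (mat_inv Td *\<^sub>v t)"
    and "taud \<equiv> Td $$ (d - 1, d - 1)"
  defines "Hhat \<equiv> Td * H * mat_inv Td"
    and "that \<equiv> (h / taud) \<cdot>\<^sub>v t"
  defines "fsk \<equiv> cmat Ud *\<^sub>v (matfun f (cmat (pinv (S * Ud) * (S * A * Ud))) *\<^sub>v
                              cvec (pinv (S * Ud) *\<^sub>v (S *\<^sub>v b)))"
  assumes A: "A \<in> carrier_mat n n"
    and b: "b \<in> carrier_vec n" "b \<noteq> 0\<^sub>v n"
    and d: "d \<ge> 1"
    and dimK: "\<forall>c \<in> carrier_vec (d+1). krylov_mat A b (d+1) *\<^sub>v c = 0\<^sub>v n \<longrightarrow> c = 0\<^sub>v (d+1)"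
    and U: "U \<in> carrier_mat n (d+1)"
    and U1: "col U 0 = (1 / vnorm b) \<cdot>\<^sub>v b"
    and Uspan: "\<forall>j \<in> {1..d+1}. col_span (take_cols U j) = krylov A b j"
    and H: "H \<in> carrier_mat d d"
    and Hhess: "\<forall>i<d. \<forall>j<d. j + 1 < i \<longrightarrow> H $$ (i,j) = 0"
    and h: "h \<noteq> 0"
    and arnoldi: "A * Ud = Ud * H + h \<cdot>\<^sub>m outer u ed"
    and S: "S \<in> carrier_mat s n"
    and fullrank: "\<forall>c \<in> carrier_vec (d+1). (S * U) *\<^sub>v c = 0\<^sub>v s \<longrightarrow> c = 0\<^sub>v (d+1)"
    and Q: "Q \<in> carrier_mat s (d+1)" "transpose_mat Q * Q = 1\<^sub>m (d+1)"
    and T: "T \<in> carrier_mat (d+1) (d+1)" "upper_triangular T"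
    and Tpos: "\<forall>i<d+1. T $$ (i,i) > 0"
    and QR: "S * U = Q * T"
    and f: "\<exists>V. open V \<and> spec (cmat (H + outer r ed)) \<subseteq> V \<and> f holomorphic_on V"
  shows "pinv (S * Ud) * (S * A * Ud) = H + outer r ed
       \<and> pinv (S * Ud) *\<^sub>v (S *\<^sub>v b) = vnorm b \<cdot>\<^sub>v unit_vec d 0
       \<and> fsk = of_real (vnorm b) \<cdot>\<^sub>v (cmat Ud *\<^sub>v (matfun f (cmat (H + outer r ed)) *\<^sub>v e1))
       \<and> fsk = of_real (vnorm (S *\<^sub>v b)) \<cdot>\<^sub>v
                (cmat (Ud * mat_inv Td) *\<^sub>v (matfun f (cmat (Hhat + outer that ed)) *\<^sub>v e1))"
proof -
  have Td_block: "Td = leading_block T d" unfolding Td_def leading_block_def ..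
  have Ud: "Ud \<in> carrier_mat n d" unfolding Ud_def using U by simp
  have e0: "unit_vec d 0 \<in> carrier_vec d" and ed: "ed \<in> carrier_vec d" unfolding ed_def by simp_all
  note QR = sketched_basis_thin_qr[OF S U Q T Tpos QR, folded Ud_def u_def Td_block t_def]
  have Td: "Td \<in> carrier_mat d d" "upper_triangular Td" "\<forall>i<d. Td $$ (i,i) > 0"
    unfolding Td_block using upper_triangular_leading_block[OF T] Tpos by (auto simp: leading_block_def)
  note Td_inv = mat_inv_nonsingular[OF Td(1)] det_upper_triangular_pos[OF Td]
  have M: "H + outer r ed \<in> carrier_mat d d" unfolding r_def t_def using H ed Td_inv by auto
  have vb: "vnorm b > 0" by (rule vnorm_pos[OF b])
  have "Ud *\<^sub>v unit_vec d 0 = col U 0"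
    using mult_unit_vec_col[OF Ud, of 0] d unfolding Ud_def by (simp add: col_take_cols)
  hence b_Ud: "b = Ud *\<^sub>v (vnorm b \<cdot>\<^sub>v unit_vec d 0)"
    using U1 vb b Ud by (simp add: mult_mat_vec smult_smult_assoc)
  have compressed_matrix: "pinv (S * Ud) * (S * A * Ud) = H + outer r ed"
    using left_inverse_sketched_arnoldi[OF A S Ud H _ ed QR(1,2) arnoldi] QR(3) col_carrier_vec[OF _ U, of d]
    unfolding r_def u_def by simp
  have compressed_rhs: "pinv (S * Ud) *\<^sub>v (S *\<^sub>v b) = vnorm b \<cdot>\<^sub>v unit_vec d 0"
    using left_inverse_sketch_apply[OF S Ud QR(1,2), of "vnorm b \<cdot>\<^sub>v unit_vec d 0"] e0 b_Ud[symmetric]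
    by simp
  have fsk_Hessenberg_form: "fsk = of_real (vnorm b) \<cdot>\<^sub>v (cmat Ud *\<^sub>v (matfun f (cmat (H + outer r ed)) *\<^sub>v e1))"
    unfolding fsk_def compressed_matrix compressed_rhs e1_def
    using mult_cvec_smult_unit_vec[OF cmat_carrier[OF Ud] matfun_cmat_carrier[OF M]] .
  have "vnorm (S *\<^sub>v b) = vnorm b * Td $$ (0,0)"
    using QR(4)[of "vnorm b"] b_Ud[symmetric] vb d unfolding Td_def by simp
  moreover have "Hhat + outer that ed = Td * (H + outer r ed) * mat_inv Td"
    unfolding Hhat_def that_def r_def taud_def ed_def
    using triangular_similarity_rank_one_update[OF Td _ H, of t h] d by (simp add: t_def)
  ultimately have fsk_triangular_form: "fsk = of_real (vnorm (S *\<^sub>v b)) \<cdot>\<^sub>v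
      (cmat (Ud * mat_inv Td) *\<^sub>v (matfun f (cmat (Hhat + outer that ed)) *\<^sub>v e1))"
    using fsk_Hessenberg_form matfun_basis_change[OF Ud Td _ M f, of "vnorm b"] d unfolding e1_def by simp
  show ?thesis using compressed_matrix compressed_rhs fsk_Hessenberg_form fsk_triangular_form by blast
qed

end
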